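(* There is a universal constant $c>0$ such that for every $m\ge2$, every $T\ge K\ge4$ (with $m\le K$), and every multi-dueling bandit algorithm, there exists an oblivious sequence of preference matrices $P_1,\dots,P_T$ on $[K]$ with a common Condorcet winner $a^\star$ (i.e. $P_t(a^\star,i)\ge1/2$ for all $i,t$) such that $\mathbb{E}[R_T^{\mathrm C}]\ge c\sqrt{KT}$.
   Context: A preference matrix on $[K]$ is $P\in[0,1]^{K\times K}$ with $P(i,j)+P(j,i)=1$, $P(i,i)=1/2$. Multi-dueling bandit protocol: at each round $t\in[T]$ the learner, based on past observations and internal randomness, selects a multiset $\mathcal{A}_t\subseteq[K]$ of size $m$ (elements listed $\mathcal{A}_t(1),\dots,\mathcal{A}_t(m)$) and observes only a winning index $I_t\in[m]$ drawn with probability $\Pr[I_t=i]=\sum_{j\ne i}\frac{2P_t(\mathcal{A}_t(i),\mathcal{A}_t(j))}{m(m-1)}$. Oblivious means the sequence $P_1,\dots,P_T$ is fixed in advance. Condorcet regret: $R_T^{\mathrm C}=\sum_{t=1}^T\frac1m\sum_{j=1}^m\Delta_t(\mathcal{A}_t(j))$ with $\Delta_t(i)=P_t(a^\star,i)-\tfrac12$. *)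

theory Defs
  imports "HOL-Probability.Probability_Mass_Function"
begin

text \<open>Arms are the natural numbers 0,...,K-1 (standing for [K]).
A preference matrix is a function nat => nat => real, constrained on [K].\<close>

definition pref_matrix :: "nat \<Rightarrow> (nat \<Rightarrow> nat \<Rightarrow> real) \<Rightarrow> bool" where
  "pref_matrix K P \<longleftrightarrow>
     (\<forall>i<K. \<forall>j<K. 0 \<le> P i j \<and> P i j \<le> 1 \<and> P i j + P j i = 1) \<and> (\<forall>i<K. P i i = 1/2)"

text \<open>An action is a listing A(1),...,A(m) of a multiset of m arms (list indices 0..m-1).
A history is the list of past (action, observed winning index) pairs.\<close>

type_synonym action = "nat list"
type_synonym history = "(action \<times> nat) list"

definition valid_alg :: "nat \<Rightarrow> nat \<Rightarrow> (history \<Rightarrow> action pmf) \<Rightarrow> bool" where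
  "valid_alg K m alg \<longleftrightarrow>
     (\<forall>h. \<forall>A\<in>set_pmf (alg h). length A = m \<and> set A \<subseteq> {..<K})"

text \<open>Probability that the winning index is i (0-based) when playing A under P.\<close>

definition win_prob :: "nat \<Rightarrow> (nat \<Rightarrow> nat \<Rightarrow> real) \<Rightarrow> action \<Rightarrow> nat \<Rightarrow> real" where
  "win_prob m P A i =
     (\<Sum>j\<in>{..<m} - {i}. 2 * P (A ! i) (A ! j) / (real m * (real m - 1)))"

definition inst_regret :: "nat \<Rightarrow> (nat \<Rightarrow> nat \<Rightarrow> real) \<Rightarrow> nat \<Rightarrow> action \<Rightarrow> real" where
  "inst_regret m P a A = (1 / real m) * (\<Sum>j<m. P a (A ! j) - 1/2)"

fun exp_regret_from ::
  "nat \<Rightarrow> (history \<Rightarrow> action pmf) \<Rightarrow> (nat \<Rightarrow> nat \<Rightarrow> nat \<Rightarrow> real) \<Rightarrow> nat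
     \<Rightarrow> nat \<Rightarrow> nat \<Rightarrow> history \<Rightarrow> real" where
  "exp_regret_from m alg Ps a t 0 h = 0"
| "exp_regret_from m alg Ps a t (Suc n) h =
     measure_pmf.expectation (alg h)
       (\<lambda>A. inst_regret m (Ps t) a A
            + (\<Sum>i<m. win_prob m (Ps t) A i * exp_regret_from m alg Ps a (Suc t) n (h @ [(A, i)])))"

definition expected_regret ::
  "nat \<Rightarrow> nat \<Rightarrow> (history \<Rightarrow> action pmf) \<Rightarrow> (nat \<Rightarrow> nat \<Rightarrow> nat \<Rightarrow> real) \<Rightarrow> nat \<Rightarrow> real" where
  "expected_regret m T alg Ps a = exp_regret_from m alg Ps a 1 T []"

end

theory Submission
  imports Defs
begin

text \<open>Let arm \<open>a\<close> beat every other arm by \<open>\<epsilon> = sqrt (K/T) / 16\<close>, all other pairs being ties.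
  The regret is then \<open>\<epsilon>\<close> times the number of rounds, minus the share of \<open>a\<close> in the played
  multisets. Under uninformative (uniform) feedback some arm \<open>a\<close> has expected share at most
  \<open>T/K\<close>, so by Markov's inequality its share reaches \<open>\<tau> = 2T/K\<close> with probability at most 1/2.
  Switching the feedback to uniform once the share of \<open>a\<close> reaches \<open>\<tau>\<close> keeps the chi-square
  divergence from uniform feedback below \<open>exp (16 \<epsilon>\<^sup>2 (\<tau> + 1)) - 1 \<le> 3/8\<close>, and a
  Cauchy--Schwarz change of measure then bounds the probability of reaching \<open>\<tau>\<close> in the true
  environment by 5/6. Hence the expected share of \<open>a\<close> is at most \<open>11T/12\<close> and the regret is at
  least \<open>\<epsilon> T / 12 = sqrt (K T) / 192\<close>.\<close>

definition spike_pref :: "real \<Rightarrow> nat \<Rightarrow> nat \<Rightarrow> nat \<Rightarrow> real" where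
  "spike_pref \<epsilon> a x y = 1/2 + \<epsilon> * (of_bool (x = a) - of_bool (y = a))"

definition arm_count :: "nat \<Rightarrow> nat \<Rightarrow> action \<Rightarrow> real" where
  "arm_count m a A = (\<Sum>j<m. of_bool (A ! j = a))"

lemma pref_matrix_spike_pref:
  assumes "\<bar>\<epsilon>\<bar> \<le> 1/2"
  shows "pref_matrix K (spike_pref \<epsilon> a)"
  using assms unfolding pref_matrix_def spike_pref_def by (auto simp: abs_le_iff)

lemma arm_count_nonneg: "0 \<le> arm_count m a A"
  unfolding arm_count_def by (simp add: sum_nonneg)

lemma arm_count_le: "arm_count m a A \<le> real m"
proof -
  have "arm_count m a A \<le> (\<Sum>j<m. 1)"
    unfolding arm_count_def by (intro sum_mono) simp
  then show ?thesis by simp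
qed

lemma sum_arm_count_le: "(\<Sum>a<K. arm_count m a A) \<le> real m"
proof -
  have "(\<Sum>a<K. arm_count m a A) = (\<Sum>j<m. of_bool (A ! j < K))"
    unfolding arm_count_def by (subst sum.swap) (simp add: of_bool_def sum.delta')
  also have "\<dots> \<le> (\<Sum>j<m. 1)" by (intro sum_mono) simp
  finally show ?thesis by simp
qed

lemma win_prob_spike_pref:
  assumes "2 \<le> m" "i < m"
  shows "win_prob m (spike_pref \<epsilon> a) A i =
    1 / real m + 2 * \<epsilon> / (real m * (real m - 1)) * (real m * of_bool (A ! i = a) - arm_count m a A)"
proof -
  have m1: "real m - 1 > 0" using assms by simp
  have row: "(\<Sum>j<m. spike_pref \<epsilon> a (A ! i) (A ! j))
      = real m / 2 + \<epsilon> * (real m * of_bool (A ! i = a) - arm_count m a A)"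
    unfolding spike_pref_def arm_count_def
    by (simp add: sum.distrib sum_subtractf sum_distrib_left algebra_simps)
  have "win_prob m (spike_pref \<epsilon> a) A i
      = (2 * (\<Sum>j<m. spike_pref \<epsilon> a (A ! i) (A ! j)) - 2 * spike_pref \<epsilon> a (A ! i) (A ! i))
          / (real m * (real m - 1))"
    unfolding win_prob_def using assms
    by (simp add: sum_diff1 sum_divide_distrib[symmetric] sum_distrib_left diff_divide_distrib)
  also have "\<dots> = 1 / real m + 2 * \<epsilon> / (real m * (real m - 1))
      * (real m * of_bool (A ! i = a) - arm_count m a A)"
    unfolding row using m1 by (simp add: spike_pref_def field_simps)
  finally show ?thesis .
qed

lemma sum_win_prob_spike_pref:
  assumes "2 \<le> m"
  shows "(\<Sum>i<m. win_prob m (spike_pref \<epsilon> a) A i) = 1"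
proof -
  define c where "c = 2 * \<epsilon> / (real m * (real m - 1))"
  have "(\<Sum>i<m. win_prob m (spike_pref \<epsilon> a) A i)
      = (\<Sum>i<m. 1 / real m) + c * (\<Sum>i<m. real m * of_bool (A ! i = a) - arm_count m a A)"
    using assms by (simp add: win_prob_spike_pref c_def sum.distrib sum_distrib_left)
  also have "(\<Sum>i<m. real m * of_bool (A ! i = a) - arm_count m a A) = 0"
    by (simp add: sum_subtractf arm_count_def flip: sum_distrib_left)
  finally show ?thesis using assms by simp
qed

lemma win_prob_spike_pref_nonneg:
  assumes "2 \<le> m" "i < m" "0 \<le> \<epsilon>" "\<epsilon> \<le> 1/4"
  shows "0 \<le> win_prob m (spike_pref \<epsilon> a) A i"
proof -
  define c where "c = 2 * \<epsilon> / (real m * (real m - 1))"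
  have c0: "0 \<le> c" using assms by (simp add: c_def)
  have "c * arm_count m a A \<le> c * real m"
    using mult_left_mono[OF arm_count_le c0] .
  also have "\<dots> = 2 * \<epsilon> / (real m - 1)" using assms by (simp add: c_def)
  also have "\<dots> \<le> 1 / real m"
  proof -
    have "\<epsilon> * (2 * real m) \<le> 1/4 * (2 * real m)"
      using assms by (intro mult_right_mono) auto
    then have "1 + \<epsilon> * (2 * real m) \<le> real m" using assms by linarith
    then show ?thesis using assms by (simp add: field_simps)
  qed
  finally have "c * arm_count m a A \<le> 1 / real m" .
  moreover have "0 \<le> c * (real m * of_bool (A ! i = a))" using c0 by simp
  ultimately show ?thesis
    unfolding win_prob_spike_pref[OF assms(1,2)] c_def[symmetric] by (simp add: right_diff_distrib)
qed

lemma sum_sq_win_prob_spike_pref_le: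
  assumes m: "2 \<le> m"
  shows "(\<Sum>i<m. real m * (win_prob m (spike_pref \<epsilon> a) A i)\<^sup>2)
    \<le> 1 + 16 * \<epsilon>\<^sup>2 * (arm_count m a A / real m)"
proof -
  define c where "c = 2 * \<epsilon> / (real m * (real m - 1))"
  define d where "d i = real m * of_bool (A ! i = a) - arm_count m a A" for i
  have m0: "real m > 0" and m1: "real m - 1 \<ge> 1" using m by auto
  have sum_d: "(\<Sum>i<m. d i) = 0"
    unfolding d_def by (simp add: sum_subtractf arm_count_def flip: sum_distrib_left)
  have sum_sq_d: "(\<Sum>i<m. (d i)\<^sup>2) = (real m)\<^sup>2 * arm_count m a A - real m * (arm_count m a A)\<^sup>2"
  proof -
    have "(\<Sum>i<m. (d i)\<^sup>2) = (\<Sum>i<m. (real m)\<^sup>2 * of_bool (A ! i = a)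
        - 2 * real m * arm_count m a A * of_bool (A ! i = a) + (arm_count m a A)\<^sup>2)"
      unfolding d_def by (intro sum.cong) (auto simp: power2_diff power_mult_distrib)
    also have "\<dots> = (real m)\<^sup>2 * arm_count m a A - 2 * real m * arm_count m a A * arm_count m a A
        + real m * (arm_count m a A)\<^sup>2"
      by (simp add: sum.distrib sum_subtractf arm_count_def flip: sum_distrib_left)
    finally show ?thesis by (simp add: power2_eq_square)
  qed
  have "(\<Sum>i<m. real m * (win_prob m (spike_pref \<epsilon> a) A i)\<^sup>2)
      = (\<Sum>i<m. 1 / real m + 2 * c * d i + real m * c\<^sup>2 * (d i)\<^sup>2)"
  proof (intro sum.cong refl)
    fix i assume "i \<in> {..<m}"
    then have w: "win_prob m (spike_pref \<epsilon> a) A i = 1 / real m + c * d i"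
      using win_prob_spike_pref[OF m] by (simp add: c_def d_def)
    show "real m * (win_prob m (spike_pref \<epsilon> a) A i)\<^sup>2 = 1 / real m + 2 * c * d i + real m * c\<^sup>2 * (d i)\<^sup>2"
      unfolding w using m0 by (simp add: power2_eq_square field_simps)
  qed
  also have "\<dots> = 1 + real m * c\<^sup>2 * ((real m)\<^sup>2 * arm_count m a A - real m * (arm_count m a A)\<^sup>2)"
    using m0 by (simp add: sum.distrib sum_distrib_left sum_d sum_sq_d flip: sum_distrib_left)
  also have "\<dots> \<le> 1 + real m * c\<^sup>2 * ((real m)\<^sup>2 * arm_count m a A)"
    using arm_count_nonneg[of m a A] m0 by (intro add_left_mono mult_left_mono) auto
  also have "\<dots> = 1 + 4 * \<epsilon>\<^sup>2 * real m / (real m - 1)\<^sup>2 * arm_count m a A"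
    using m0 m1 by (simp add: c_def power_divide power_mult_distrib)
  also have "\<dots> \<le> 1 + 16 * \<epsilon>\<^sup>2 / real m * arm_count m a A"
  proof (intro add_left_mono mult_right_mono arm_count_nonneg)
    \<comment> \<open>\<open>(3m - 2)(m - 2) = 4(m - 1)\<^sup>2 - m\<^sup>2\<close>\<close>
    have "0 \<le> (3 * real m - 2) * (real m - 2)" using m by (intro mult_nonneg_nonneg) auto
    then have "4 * \<epsilon>\<^sup>2 * (real m * real m) \<le> 4 * \<epsilon>\<^sup>2 * (4 * (real m - 1)\<^sup>2)"
      by (intro mult_left_mono) (auto simp: power2_eq_square algebra_simps)
    then show "4 * \<epsilon>\<^sup>2 * real m / (real m - 1)\<^sup>2 \<le> 16 * \<epsilon>\<^sup>2 / real m"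
      using m0 m1 by (simp add: field_simps)
  qed
  finally show ?thesis by simp
qed

lemma inst_regret_spike_pref:
  assumes "0 < m"
  shows "inst_regret m (spike_pref \<epsilon> a) a A = \<epsilon> * (1 - arm_count m a A / real m)"
proof -
  have "(\<Sum>j<m. spike_pref \<epsilon> a a (A ! j) - 1/2) = \<epsilon> * (real m - arm_count m a A)"
    unfolding spike_pref_def arm_count_def by (simp add: sum_subtractf sum_distrib_left algebra_simps)
  then show ?thesis unfolding inst_regret_def using assms by (simp add: field_simps)
qed

definition arm_share :: "nat \<Rightarrow> nat \<Rightarrow> history \<Rightarrow> real" where
  "arm_share m a h = (\<Sum>(A, i)\<leftarrow>h. arm_count m a A / real m)"

lemma arm_share_Nil [simp]: "arm_share m a [] = 0"
  by (simp add: arm_share_def)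

lemma arm_share_snoc [simp]: "arm_share m a (h @ [(A, i)]) = arm_share m a h + arm_count m a A / real m"
  by (simp add: arm_share_def)

lemma arm_share_nonneg: "0 \<le> arm_share m a h"
  by (induction h rule: rev_induct) (auto simp: arm_count_nonneg)

lemma arm_share_le_append: "arm_share m a h \<le> arm_share m a (h @ h')"
  by (induction h' rule: rev_induct) (auto simp: arm_count_nonneg simp flip: append_assoc intro: order_trans)

lemma arm_share_le_length:
  assumes "0 < m"
  shows "arm_share m a h \<le> real (length h)"
proof (induction h rule: rev_induct)
  case (snoc x h)
  have "arm_count m a (fst x) / real m \<le> 1"
    using arm_count_le[of m a "fst x"] assms by simp
  then show ?case using snoc by (cases x) simp
qed simp

lemma sum_arm_share_le_length:
  assumes "0 < m"
  shows "(\<Sum>a<K. arm_share m a h) \<le> real (length h)"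
proof (induction h rule: rev_induct)
  case (snoc x h)
  obtain A i where x: "x = (A, i)" by fastforce
  have "(\<Sum>a<K. arm_count m a A / real m) \<le> 1"
    using sum_arm_count_le[where K=K and m=m and A=A] assms by (simp add: field_simps flip: sum_divide_distrib)
  then show ?case using snoc by (simp add: x sum.distrib)
qed simp

lemma exp_divergence_budget_le:
  assumes "4 \<le> K" "K \<le> T"
  shows "exp (16 * (sqrt (real K / real T) / 16)\<^sup>2 * (2 * real T / real K + 1)) \<le> 11/8"
proof -
  let ?x = "16 * (sqrt (real K / real T) / 16)\<^sup>2 * (2 * real T / real K + 1)"
  have "?x = (2 + real K / real T) / 16"
    using assms by (simp add: power_divide field_simps)
  moreover have "real K / real T \<le> 1" using assms by simp
  ultimately have x: "0 \<le> ?x" "?x \<le> 3/16" by auto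
  have "exp ?x \<le> 1 + 2 * ?x"
    using exp_bound_lemma[of ?x] x by simp
  then show ?thesis using x by simp
qed

locale bandit_alg =
  fixes K m :: nat and alg :: "history \<Rightarrow> action pmf"
  assumes valid: "valid_alg K m alg" and m_pos: "0 < m"
begin

definition actions :: "action set" where
  "actions = {A. set A \<subseteq> {..<K} \<and> length A = m}"

lemma finite_actions: "finite actions"
  unfolding actions_def by (rule finite_lists_length_eq) simp

lemma set_pmf_alg_subset_actions: "set_pmf (alg h) \<subseteq> actions"
  using valid unfolding valid_alg_def actions_def by auto

lemma sum_pmf_alg_actions: "(\<Sum>A\<in>actions. pmf (alg h) A) = 1"
  by (rule sum_pmf_eq_1[OF finite_actions set_pmf_alg_subset_actions])

lemma expectation_alg_eq_sum:
  "measure_pmf.expectation (alg h) f = (\<Sum>A\<in>actions. pmf (alg h) A * f A)"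
  using integral_measure_pmf_real[OF finite_actions, of "alg h" f] set_pmf_alg_subset_actions
  by (auto simp: mult.commute)

text \<open>The winning index \<open>i\<close> is observed with weight \<open>q h A i\<close> for an arbitrary feedback kernel
  \<open>q\<close>, not only one coming from a preference matrix: the argument also runs the algorithm under
  uniform feedback and under feedback that turns uniform at a stopping time.\<close>

fun expect_after ::
  "(history \<Rightarrow> action \<Rightarrow> nat \<Rightarrow> real) \<Rightarrow> (history \<Rightarrow> real) \<Rightarrow> nat \<Rightarrow> history \<Rightarrow> real" where
  "expect_after q g 0 h = g h"
| "expect_after q g (Suc n) h =
     (\<Sum>A\<in>actions. pmf (alg h) A * (\<Sum>i<m. q h A i * expect_after q g n (h @ [(A, i)])))"

definition nonneg_kernel :: "(history \<Rightarrow> action \<Rightarrow> nat \<Rightarrow> real) \<Rightarrow> bool" where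
  "nonneg_kernel q \<longleftrightarrow> (\<forall>h. \<forall>A\<in>actions. \<forall>i<m. 0 \<le> q h A i)"

definition feedback_kernel :: "(history \<Rightarrow> action \<Rightarrow> nat \<Rightarrow> real) \<Rightarrow> bool" where
  "feedback_kernel q \<longleftrightarrow> nonneg_kernel q \<and> (\<forall>h. \<forall>A\<in>actions. (\<Sum>i<m. q h A i) = 1)"

lemma feedback_kernel_nonneg: "feedback_kernel q \<Longrightarrow> nonneg_kernel q"
  by (simp add: feedback_kernel_def)

lemma expect_after_mono_invariant:
  assumes q: "nonneg_kernel q" and inv: "P h"
    and inv_step: "\<And>h' A i. P h' \<Longrightarrow> A \<in> actions \<Longrightarrow> i < m \<Longrightarrow> P (h' @ [(A, i)])"
    and le: "\<And>h'. P h' \<Longrightarrow> g h' \<le> g' h'"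
  shows "expect_after q g n h \<le> expect_after q g' n h"
  using inv
proof (induction n arbitrary: h)
  case 0
  then show ?case using le by simp
next
  case (Suc n)
  show ?case
    unfolding expect_after.simps using Suc.IH[OF inv_step[OF Suc.prems]] q
    by (intro sum_mono mult_left_mono) (auto simp: nonneg_kernel_def)
qed

lemma expect_after_mono:
  "nonneg_kernel q \<Longrightarrow> (\<And>h. g h \<le> g' h) \<Longrightarrow> expect_after q g n h \<le> expect_after q g' n h"
  using expect_after_mono_invariant[where P = "\<lambda>_. True"] by blast

lemma expect_after_linear:
  "expect_after q (\<lambda>h. c * g h + d * g' h) n h = c * expect_after q g n h + d * expect_after q g' n h"
  by (induction n arbitrary: h) (simp_all add: algebra_simps sum.distrib sum_distrib_left)

lemma expect_after_scale: "expect_after q (\<lambda>h. c * g h) n h = c * expect_after q g n h"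
  using expect_after_linear[of q c g 0 g n h] by simp

lemma expect_after_nonneg:
  "nonneg_kernel q \<Longrightarrow> (\<And>h. 0 \<le> g h) \<Longrightarrow> 0 \<le> expect_after q g n h"
  using expect_after_mono[of q "\<lambda>h. 0 * g h" g n h] expect_after_scale[of q 0 g n h] by simp

lemma expect_after_sum:
  "expect_after q (\<lambda>h. \<Sum>a\<in>F. g a h) n h = (\<Sum>a\<in>F. expect_after q (g a) n h)"
  by (induction n arbitrary: h) (simp_all add: sum_distrib_left sum.swap[of _ F])

lemma expect_after_add_const:
  assumes "feedback_kernel q"
  shows "expect_after q (\<lambda>h. g h + c) n h = expect_after q g n h + c"
proof (induction n arbitrary: h)
  case (Suc n)
  have "(\<Sum>i<m. q h A i * expect_after q (\<lambda>h. g h + c) n (h @ [(A, i)]))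
      = (\<Sum>i<m. q h A i * expect_after q g n (h @ [(A, i)])) + c" if "A \<in> actions" for A
    using assms that
    by (simp add: Suc.IH distrib_left sum.distrib feedback_kernel_def flip: sum_distrib_right)
  then show ?case
    by (simp add: distrib_left sum.distrib sum_pmf_alg_actions flip: sum_distrib_right)
qed simp

lemma expect_after_length:
  assumes "feedback_kernel q"
  shows "expect_after q (\<lambda>h. real (length h)) n h = real (length h) + n"
proof (induction n arbitrary: h)
  case (Suc n)
  have "(\<Sum>i<m. q h A i * expect_after q (\<lambda>h. real (length h)) n (h @ [(A, i)]))
      = real (length h) + Suc n" if "A \<in> actions" for A
    using assms that by (simp add: Suc.IH feedback_kernel_def flip: sum_distrib_right)
  then show ?case by (simp add: sum_pmf_alg_actions flip: sum_distrib_right)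
qed simp

lemma expect_after_cong_length:
  "(\<And>h'. length h' = length h + n \<Longrightarrow> g h' = g' h') \<Longrightarrow> expect_after q g n h = expect_after q g' n h"
  by (induction n arbitrary: h) simp_all

definition uniform_fb :: "history \<Rightarrow> action \<Rightarrow> nat \<Rightarrow> real" where
  "uniform_fb h A i = 1 / real m"

lemma feedback_kernel_uniform_fb: "feedback_kernel uniform_fb"
  using m_pos unfolding feedback_kernel_def nonneg_kernel_def uniform_fb_def by simp

text \<open>The second moment of the likelihood ratio of \<open>q\<close> against \<open>uniform_fb\<close>: its one-step
  weight \<open>m q\<^sup>2 = (q / (1/m))\<^sup>2 \<cdot> (1/m)\<close> is the chi-square weight of \<open>q\<close> under uniform feedback.\<close>

fun lr_moment :: "(history \<Rightarrow> action \<Rightarrow> nat \<Rightarrow> real) \<Rightarrow> nat \<Rightarrow> history \<Rightarrow> real" where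
  "lr_moment q 0 h = 1"
| "lr_moment q (Suc n) h =
     (\<Sum>A\<in>actions. pmf (alg h) A * (\<Sum>i<m. real m * (q h A i)\<^sup>2 * lr_moment q n (h @ [(A, i)])))"

text \<open>Cauchy--Schwarz \<open>E\<^sub>q f = E\<^sub>0 (L f) \<le> (t E\<^sub>0 f\<^sup>2 + E\<^sub>0 L\<^sup>2 / t) / 2\<close> for the likelihood ratio
  \<open>L\<close>, kept in AM--GM form so that it can be proved round by round: the factor \<open>t\<close> is
  rescaled by the one-step ratio \<open>m q\<close> in each round.\<close>

lemma expect_after_le_lr_moment:
  assumes q: "nonneg_kernel q" and t: "0 < t"
  shows "expect_after q f n h \<le> (t * expect_after uniform_fb (\<lambda>h. (f h)\<^sup>2) n h + lr_moment q n h / t) / 2"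
  using t
proof (induction n arbitrary: h t)
  case 0
  have "0 \<le> (t * f h - 1)\<^sup>2 / t" using 0 by simp
  then show ?case using 0 by (simp add: field_simps power2_eq_square)
next
  case (Suc n)
  let ?E0 = "\<lambda>h. expect_after uniform_fb (\<lambda>h. (f h)\<^sup>2) n h"
  have m0: "0 < real m" using m_pos by simp
  have step: "q h A i * expect_after q f n h'
      \<le> (t * (?E0 h' / real m) + real m * (q h A i)\<^sup>2 * lr_moment q n h' / t) / 2"
    if "A \<in> actions" "i < m" for A i h'
  proof (cases "q h A i = 0")
    case True
    then show ?thesis
      using Suc.prems m0 expect_after_nonneg[OF feedback_kernel_nonneg[OF feedback_kernel_uniform_fb]]
      by simp
  next
    case False
    then have q_pos: "0 < q h A i" using q that by (simp add: nonneg_kernel_def order_le_neq_trans)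
    define s where "s = t / (real m * q h A i)"
    have "q h A i * expect_after q f n h' \<le> q h A i * ((s * ?E0 h' + lr_moment q n h' / s) / 2)"
      using Suc.IH[of s h'] Suc.prems q_pos m0 by (simp add: s_def)
    also have "\<dots> = (t * (?E0 h' / real m) + real m * (q h A i)\<^sup>2 * lr_moment q n h' / t) / 2"
      using q_pos m0 Suc.prems by (simp add: s_def field_simps power2_eq_square)
    finally show ?thesis .
  qed
  have "expect_after q f (Suc n) h \<le> (\<Sum>A\<in>actions. pmf (alg h) A * (\<Sum>i<m.
      (t * (?E0 (h @ [(A, i)]) / real m)
        + real m * (q h A i)\<^sup>2 * lr_moment q n (h @ [(A, i)]) / t) / 2))"
    unfolding expect_after.simps by (intro sum_mono mult_left_mono) (use step in auto)
  also have "\<dots> = (t * expect_after uniform_fb (\<lambda>h. (f h)\<^sup>2) (Suc n) h + lr_moment q (Suc n) h / t) / 2"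
    by (simp add: uniform_fb_def sum_distrib_left sum_divide_distrib algebra_simps
        add_divide_distrib sum.distrib)
  finally show ?case .
qed

lemma expect_after_le_stopped:
  assumes q: "feedback_kernel q" and q': "feedback_kernel q'"
    and stopped_snoc: "\<And>h x. stopped h \<Longrightarrow> stopped (h @ [x])"
    and agree: "\<And>h A i. \<not> stopped h \<Longrightarrow> q' h A i = q h A i"
    and g: "\<And>h. g h \<le> real (length h)"
  shows "expect_after q g n h \<le> expect_after q' (\<lambda>h. if stopped h then real (length h) else g h) n h"
proof (induction n arbitrary: h)
  case 0
  then show ?case using g by simp
next
  case (Suc n)
  show ?case
  proof (cases "stopped h")
    case True
    have "expect_after q g (Suc n) h \<le> expect_after q (\<lambda>h. real (length h)) (Suc n) h"
      using q g by (intro expect_after_mono feedback_kernel_nonneg)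
    also have "\<dots> = expect_after q' (\<lambda>h. real (length h)) (Suc n) h"
      by (simp only: expect_after_length[OF q] expect_after_length[OF q'])
    also have "\<dots> \<le> expect_after q' (\<lambda>h. if stopped h then real (length h) else g h) (Suc n) h"
      using q' True stopped_snoc
      by (intro expect_after_mono_invariant[where P = stopped] feedback_kernel_nonneg) auto
    finally show ?thesis .
  next
    case False
    show ?thesis
      unfolding expect_after.simps agree[OF False] using Suc q
      by (intro sum_mono mult_left_mono) (auto simp: feedback_kernel_def nonneg_kernel_def)
  qed
qed

text \<open>Pigeonhole: the shares of the \<open>K\<close> arms add up to at most \<open>n\<close>.\<close>

lemma exists_arm_rarely_played:
  assumes "0 < K"
  shows "\<exists>a<K. expect_after uniform_fb (arm_share m a) n [] \<le> real n / real K"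
proof (rule ccontr)
  assume "\<not> ?thesis"
  then have "(\<Sum>a<K. real n / real K) < (\<Sum>a<K. expect_after uniform_fb (arm_share m a) n [])"
    using assms by (intro sum_strict_mono) auto
  also have "\<dots> = expect_after uniform_fb (\<lambda>h. \<Sum>a<K. arm_share m a h) n []"
    by (simp add: expect_after_sum)
  also have "\<dots> \<le> expect_after uniform_fb (\<lambda>h. real (length h)) n []"
    using m_pos feedback_kernel_uniform_fb
    by (intro expect_after_mono feedback_kernel_nonneg sum_arm_share_le_length)
  also have "\<dots> = real n"
    by (simp add: expect_after_length[OF feedback_kernel_uniform_fb])
  finally show False using assms by simp
qed

end

locale dueling_alg = bandit_alg + assumes two_le_m: "2 \<le> m"
begin

lemma feedback_kernel_spike_pref:
  assumes "0 \<le> \<epsilon>" "\<epsilon> \<le> 1/4"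
  shows "feedback_kernel (\<lambda>_. win_prob m (spike_pref \<epsilon> a))"
  using assms two_le_m win_prob_spike_pref_nonneg sum_win_prob_spike_pref
  unfolding feedback_kernel_def nonneg_kernel_def by auto

definition stopped_fb :: "real \<Rightarrow> nat \<Rightarrow> real \<Rightarrow> history \<Rightarrow> action \<Rightarrow> nat \<Rightarrow> real" where
  "stopped_fb \<epsilon> a \<tau> h =
     (if \<tau> \<le> arm_share m a h then uniform_fb h else win_prob m (spike_pref \<epsilon> a))"

lemma feedback_kernel_stopped_fb:
  assumes "0 \<le> \<epsilon>" "\<epsilon> \<le> 1/4"
  shows "feedback_kernel (stopped_fb \<epsilon> a \<tau>)"
  using feedback_kernel_uniform_fb feedback_kernel_spike_pref[OF assms]
  unfolding feedback_kernel_def nonneg_kernel_def stopped_fb_def by simp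

text \<open>Each unstopped round multiplies the moment by at most \<open>exp (16 \<epsilon>\<^sup>2 s)\<close>, where \<open>s\<close> is the
  share of \<open>a\<close> in that round, and a share of at most \<open>\<tau> + 1\<close> accumulates before stopping.\<close>

lemma lr_moment_stopped_fb_le:
  "lr_moment (stopped_fb \<epsilon> a \<tau>) n h \<le> exp (16 * \<epsilon>\<^sup>2 * max 0 (\<tau> + 1 - arm_share m a h))"
proof (induction n arbitrary: h)
  case 0
  then show ?case by simp
next
  case (Suc n)
  define C where "C = 16 * \<epsilon>\<^sup>2"
  define B where "B h = exp (C * max 0 (\<tau> + 1 - arm_share m a h))" for h
  let ?q = "stopped_fb \<epsilon> a \<tau>"
  have m0: "0 < real m" using m_pos by simp
  have "(\<Sum>i<m. real m * (?q h A i)\<^sup>2 * lr_moment ?q n (h @ [(A, i)])) \<le> B h" for A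
  proof -
    define s where "s = arm_count m a A / real m"
    have s: "0 \<le> s" "s \<le> 1"
      using arm_count_nonneg[of m a A] arm_count_le[of m a A] m0 by (auto simp: s_def)
    have IH: "lr_moment ?q n (h @ [(A, i)]) \<le> exp (C * max 0 (\<tau> + 1 - (arm_share m a h + s)))" for i
      using Suc.IH[of "h @ [(A, i)]"] by (simp add: C_def s_def)
    have "(\<Sum>i<m. real m * (?q h A i)\<^sup>2 * lr_moment ?q n (h @ [(A, i)]))
        \<le> (\<Sum>i<m. real m * (?q h A i)\<^sup>2) * exp (C * max 0 (\<tau> + 1 - (arm_share m a h + s)))"
      unfolding sum_distrib_right using IH by (intro sum_mono mult_left_mono) simp_all
    also have "\<dots> \<le> B h"
    proof (cases "\<tau> \<le> arm_share m a h")
      case True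
      then have "(\<Sum>i<m. real m * (?q h A i)\<^sup>2) = 1"
        using m0 by (simp add: stopped_fb_def uniform_fb_def power2_eq_square)
      moreover have "C * max 0 (\<tau> + 1 - (arm_share m a h + s)) \<le> C * max 0 (\<tau> + 1 - arm_share m a h)"
        using s by (intro mult_left_mono) (auto simp: C_def)
      ultimately show ?thesis by (simp add: B_def)
    next
      case False
      have "(\<Sum>i<m. real m * (?q h A i)\<^sup>2) \<le> 1 + C * s"
        using False sum_sq_win_prob_spike_pref_le[OF two_le_m]
        by (simp add: stopped_fb_def C_def s_def)
      also have "\<dots> \<le> exp (C * s)" by (rule exp_ge_add_one_self)
      finally have chi_sq: "(\<Sum>i<m. real m * (?q h A i)\<^sup>2) \<le> exp (C * s)" .
      have "max 0 (\<tau> + 1 - (arm_share m a h + s)) = \<tau> + 1 - (arm_share m a h + s)"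
        using False s by simp
      then have "(\<Sum>i<m. real m * (?q h A i)\<^sup>2) * exp (C * max 0 (\<tau> + 1 - (arm_share m a h + s)))
          \<le> exp (C * s) * exp (C * (\<tau> + 1 - (arm_share m a h + s)))"
        using chi_sq by (simp add: mult_right_mono)
      also have "\<dots> = B h"
        using False by (simp add: B_def max_def mult_exp_exp algebra_simps)
      finally show ?thesis .
    qed
    finally show ?thesis .
  qed
  then have "lr_moment ?q (Suc n) h \<le> (\<Sum>A\<in>actions. pmf (alg h) A * B h)"
    unfolding lr_moment.simps by (intro sum_mono mult_left_mono) auto
  also have "\<dots> = B h" by (simp add: sum_pmf_alg_actions flip: sum_distrib_right)
  finally show ?case by (simp add: B_def C_def)
qed

lemma exp_regret_from_spike_pref:
  fixes \<epsilon> :: real and a :: nat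
  defines "R \<equiv> \<lambda>h. \<epsilon> * (real (length h) - arm_share m a h)"
  shows "exp_regret_from m alg (\<lambda>_. spike_pref \<epsilon> a) a t n h
    = expect_after (\<lambda>_. win_prob m (spike_pref \<epsilon> a)) R n h - R h"
proof (induction n arbitrary: t h)
  case 0
  then show ?case by simp
next
  case (Suc n)
  let ?w = "win_prob m (spike_pref \<epsilon> a)"
  let ?E = "expect_after (\<lambda>_. ?w) R n"
  have R_snoc: "R (h @ [(A, i)]) = R h + inst_regret m (spike_pref \<epsilon> a) a A" for A i
    using m_pos by (simp add: R_def inst_regret_spike_pref algebra_simps)
  have sum_w: "(\<Sum>i<m. ?w A i) = 1" for A
    by (rule sum_win_prob_spike_pref[OF two_le_m])
  have "inst_regret m (spike_pref \<epsilon> a) a A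
      + (\<Sum>i<m. ?w A i * exp_regret_from m alg (\<lambda>_. spike_pref \<epsilon> a) a (Suc t) n (h @ [(A, i)]))
      = inst_regret m (spike_pref \<epsilon> a) a A
      + (\<Sum>i<m. ?w A i * (?E (h @ [(A, i)]) - (R h + inst_regret m (spike_pref \<epsilon> a) a A)))" for A
    by (simp add: Suc.IH R_snoc)
  also have "\<dots> A = (\<Sum>i<m. ?w A i * ?E (h @ [(A, i)])) - R h" for A
    by (simp add: right_diff_distrib sum_subtractf sum_w flip: sum_distrib_right)
  finally have step: "inst_regret m (spike_pref \<epsilon> a) a A
      + (\<Sum>i<m. ?w A i * exp_regret_from m alg (\<lambda>_. spike_pref \<epsilon> a) a (Suc t) n (h @ [(A, i)]))
      = (\<Sum>i<m. ?w A i * ?E (h @ [(A, i)])) - R h" for A .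
  show ?case
    by (simp add: step expectation_alg_eq_sum right_diff_distrib sum_subtractf sum_pmf_alg_actions
        flip: sum_distrib_right)
qed

lemma expected_regret_spike_pref:
  assumes "0 \<le> \<epsilon>" "\<epsilon> \<le> 1/4"
  shows "expected_regret m n alg (\<lambda>_. spike_pref \<epsilon> a) a
    = \<epsilon> * (real n - expect_after (\<lambda>_. win_prob m (spike_pref \<epsilon> a)) (arm_share m a) n [])"
proof -
  have "expected_regret m n alg (\<lambda>_. spike_pref \<epsilon> a) a = expect_after (\<lambda>_. win_prob m (spike_pref \<epsilon> a))
      (\<lambda>h. \<epsilon> * real (length h) + (- \<epsilon>) * arm_share m a h) n []"
    by (simp add: expected_regret_def exp_regret_from_spike_pref algebra_simps)
  then show ?thesis
    unfolding expect_after_linear by (simp add: expect_after_length[OF feedback_kernel_spike_pref[OF assms]]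
        algebra_simps)
qed

abbreviation stop_event :: "nat \<Rightarrow> real \<Rightarrow> history \<Rightarrow> real" where
  "stop_event a \<tau> h \<equiv> of_bool (\<tau> \<le> arm_share m a h)"

lemma expect_share_le_stop_event:
  assumes "0 \<le> \<epsilon>" "\<epsilon> \<le> 1/4"
  shows "expect_after (\<lambda>_. win_prob m (spike_pref \<epsilon> a)) (arm_share m a) n []
    \<le> (real n - \<tau>) * expect_after (stopped_fb \<epsilon> a \<tau>) (stop_event a \<tau>) n [] + \<tau>"
proof -
  let ?q = "stopped_fb \<epsilon> a \<tau>"
  have q: "feedback_kernel ?q" by (rule feedback_kernel_stopped_fb[OF assms])
  have "expect_after (\<lambda>_. win_prob m (spike_pref \<epsilon> a)) (arm_share m a) n []
      \<le> expect_after ?q (\<lambda>h. if \<tau> \<le> arm_share m a h then real (length h) else arm_share m a h) n []"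
  proof (rule expect_after_le_stopped[OF feedback_kernel_spike_pref[OF assms] q])
    show "\<tau> \<le> arm_share m a (h @ [x])" if "\<tau> \<le> arm_share m a h" for h x
      using that arm_share_le_append[of m a h "[x]"] by linarith
  qed (simp_all add: stopped_fb_def arm_share_le_length[OF m_pos])
  also have "\<dots> \<le> expect_after ?q (\<lambda>h. (real (length h) - \<tau>) * stop_event a \<tau> h + \<tau>) n []"
    using q by (intro expect_after_mono feedback_kernel_nonneg) auto
  also have "\<dots> = expect_after ?q (\<lambda>h. (real n - \<tau>) * stop_event a \<tau> h + \<tau>) n []"
    by (rule expect_after_cong_length) simp
  also have "\<dots> = (real n - \<tau>) * expect_after ?q (stop_event a \<tau>) n [] + \<tau>"
    by (simp add: expect_after_add_const[OF q] expect_after_scale)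
  finally show ?thesis .
qed

lemma expect_stop_event_le:
  assumes "0 \<le> \<epsilon>" "\<epsilon> \<le> 1/4" "0 < \<tau>" "0 < t"
  shows "expect_after (stopped_fb \<epsilon> a \<tau>) (stop_event a \<tau>) n []
    \<le> (t * (expect_after uniform_fb (arm_share m a) n [] / \<tau>) + exp (16 * \<epsilon>\<^sup>2 * (\<tau> + 1)) / t) / 2"
proof -
  have u: "nonneg_kernel uniform_fb"
    by (rule feedback_kernel_nonneg[OF feedback_kernel_uniform_fb])
  have "expect_after uniform_fb (\<lambda>h. (stop_event a \<tau> h)\<^sup>2) n []
      \<le> expect_after uniform_fb (\<lambda>h. 1 / \<tau> * arm_share m a h) n []"
    using assms(3) arm_share_nonneg[of m a] by (intro expect_after_mono[OF u]) simp
  also have "\<dots> = expect_after uniform_fb (arm_share m a) n [] / \<tau>"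
    using expect_after_scale[of uniform_fb "1 / \<tau>" "arm_share m a" n "[]"] by simp
  finally have markov: "expect_after uniform_fb (\<lambda>h. (stop_event a \<tau> h)\<^sup>2) n []
      \<le> expect_after uniform_fb (arm_share m a) n [] / \<tau>" .
  have lr: "lr_moment (stopped_fb \<epsilon> a \<tau>) n [] \<le> exp (16 * \<epsilon>\<^sup>2 * (\<tau> + 1))"
    using lr_moment_stopped_fb_le[of \<epsilon> a \<tau> n "[]"] assms(3) by simp
  have "expect_after (stopped_fb \<epsilon> a \<tau>) (stop_event a \<tau>) n []
      \<le> (t * expect_after uniform_fb (\<lambda>h. (stop_event a \<tau> h)\<^sup>2) n []
        + lr_moment (stopped_fb \<epsilon> a \<tau>) n [] / t) / 2"
    using feedback_kernel_stopped_fb[OF assms(1,2)] assms(4)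
    by (intro expect_after_le_lr_moment feedback_kernel_nonneg) auto
  also have "\<dots> \<le> (t * (expect_after uniform_fb (arm_share m a) n [] / \<tau>)
      + exp (16 * \<epsilon>\<^sup>2 * (\<tau> + 1)) / t) / 2"
    using markov lr assms(4) by (intro divide_right_mono add_mono mult_left_mono) auto
  finally show ?thesis .
qed

lemma spike_pref_regret_lower_bound:
  fixes T :: nat
  assumes K: "4 \<le> K" "K \<le> T"
    and rare: "expect_after uniform_fb (arm_share m a) T [] \<le> real T / real K"
  defines "\<epsilon> \<equiv> sqrt (real K / real T) / 16"
  shows "sqrt (real K * real T) / 192 \<le> expected_regret m T alg (\<lambda>_. spike_pref \<epsilon> a) a"
proof -
  define \<tau> where "\<tau> = 2 * real T / real K"
  have T0: "0 < real T" and K0: "0 < real K" and KT: "real K / real T \<le> 1" using K by auto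
  have "0 \<le> sqrt (real K / real T)" "sqrt (real K / real T) \<le> 1" using KT by simp_all
  then have \<epsilon>: "0 \<le> \<epsilon>" "\<epsilon> \<le> 1/4" unfolding \<epsilon>_def by linarith+
  have \<tau>: "0 < \<tau>" "\<tau> \<le> real T / 2" using K T0 by (auto simp: \<tau>_def field_simps)
  have lr: "exp (16 * \<epsilon>\<^sup>2 * (\<tau> + 1)) \<le> 11/8"
    unfolding \<epsilon>_def \<tau>_def using K by (rule exp_divergence_budget_le)
  have "expect_after uniform_fb (arm_share m a) T [] / \<tau> \<le> 1/2"
    using rare \<tau>(1) T0 K0 by (simp add: \<tau>_def field_simps)
  moreover have "expect_after (stopped_fb \<epsilon> a \<tau>) (stop_event a \<tau>) T []
      \<le> (3/2 * (expect_after uniform_fb (arm_share m a) T [] / \<tau>) + exp (16 * \<epsilon>\<^sup>2 * (\<tau> + 1)) / (3/2)) / 2"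
    by (rule expect_stop_event_le[OF \<epsilon> \<tau>(1)]) simp
  ultimately have "expect_after (stopped_fb \<epsilon> a \<tau>) (stop_event a \<tau>) T [] \<le> 5/6"
    using lr by (simp add: field_simps)
  then have "(real T - \<tau>) * expect_after (stopped_fb \<epsilon> a \<tau>) (stop_event a \<tau>) T [] \<le> (real T - \<tau>) * (5/6)"
    using \<tau> by (intro mult_left_mono) auto
  then have "expect_after (\<lambda>_. win_prob m (spike_pref \<epsilon> a)) (arm_share m a) T [] \<le> 11/12 * real T"
    using expect_share_le_stop_event[OF \<epsilon>, of a T \<tau>] \<tau> by (simp add: algebra_simps)
  then have "real T / 12 \<le> real T - expect_after (\<lambda>_. win_prob m (spike_pref \<epsilon> a)) (arm_share m a) T []"
    by linarith
  then have "\<epsilon> * (real T / 12) \<le> expected_regret m T alg (\<lambda>_. spike_pref \<epsilon> a) a"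
    unfolding expected_regret_spike_pref[OF \<epsilon>] using \<epsilon>(1) by (rule mult_left_mono)
  moreover have "\<epsilon> * (real T / 12) = sqrt (real K * real T) / 192"
  proof -
    have "sqrt (real K / real T) * real T = sqrt (real K * real T)"
      using T0 by (simp add: real_sqrt_divide real_sqrt_mult field_simps)
    then show ?thesis by (simp add: \<epsilon>_def field_simps)
  qed
  ultimately show ?thesis by simp
qed

end

theorem theorem2:
  shows "\<exists>c::real. c > 0 \<and>
    (\<forall>(m::nat) (K::nat) (T::nat) (alg :: history \<Rightarrow> action pmf).
       2 \<le> m \<longrightarrow> m \<le> K \<longrightarrow> 4 \<le> K \<longrightarrow> K \<le> T \<longrightarrow> valid_alg K m alg \<longrightarrow>
       (\<exists>(Ps :: nat \<Rightarrow> nat \<Rightarrow> nat \<Rightarrow> real) (a::nat).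
          a < K \<and>
          (\<forall>t\<in>{1..T}. pref_matrix K (Ps t)) \<and>
          (\<forall>t\<in>{1..T}. \<forall>i<K. Ps t a i \<ge> 1/2) \<and>
          expected_regret m T alg Ps a \<ge> c * sqrt (real K * real T)))"
proof (intro exI[of _ "1/192"] conjI allI impI)
  fix m K T :: nat and alg :: "history \<Rightarrow> action pmf"
  assume m: "2 \<le> m" and K: "4 \<le> K" "K \<le> T" and valid: "valid_alg K m alg"
  interpret dueling_alg K m alg
    using m valid by unfold_locales auto
  obtain a where a: "a < K" and rare: "expect_after uniform_fb (arm_share m a) T [] \<le> real T / real K"
    using exists_arm_rarely_played[of T] K by auto
  define \<epsilon> where "\<epsilon> = sqrt (real K / real T) / 16"
  have "0 \<le> sqrt (real K / real T)" "sqrt (real K / real T) \<le> 1" using K by simp_all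
  then have "0 \<le> \<epsilon>" "\<epsilon> \<le> 1/2" unfolding \<epsilon>_def by linarith+
  then show "\<exists>Ps a. a < K \<and> (\<forall>t\<in>{1..T}. pref_matrix K (Ps t)) \<and> (\<forall>t\<in>{1..T}. \<forall>i<K. 1/2 \<le> Ps t a i)
      \<and> 1/192 * sqrt (real K * real T) \<le> expected_regret m T alg Ps a"
    using a spike_pref_regret_lower_bound[OF K rare] pref_matrix_spike_pref[of \<epsilon> K a]
    by (intro exI[of _ "\<lambda>_. spike_pref \<epsilon> a"] exI[of _ a]) (auto simp: \<epsilon>_def spike_pref_def)
qed simp

end
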